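(* Let $\delta$ satisfy the Kalmanson conditions with respect to $\pi=(x_1,\dots,x_n)$, let $C_1,\dots,C_m$ ($m\ge3$) be a partition of $X$ into consecutive intervals of $\pi$ in this order, and let $\mu$ be a block weighting. Then for every $1\le i$ with $i+2\le m$, \[Q_\delta(C_i,C_{i+2})-Q_\delta(C_i,C_{i+1})\ge0.\]
   Context: $X=\{1,\dots,n\}$. A dissimilarity map is $\delta:X\times X\to\mathbb{R}$ with $\delta(i,j)=\delta(j,i)\ge0$, $\delta(i,i)=0$. A circular ordering is a listing $\pi=(x_1,\dots,x_n)$ of $X$ regarded cyclically. $\delta$ satisfies the Kalmanson conditions with respect to $\pi$ if for all $1\le i<j<k<l\le n$: $\delta(x_i,x_j)+\delta(x_k,x_l)\le\delta(x_i,x_k)+\delta(x_j,x_l)$ and $\delta(x_i,x_l)+\delta(x_j,x_k)\le\delta(x_i,x_k)+\delta(x_j,x_l)$. The partition into consecutive intervals means $C_1=\{x_1,\dots,x_{a_1}\}$, $C_2=\{x_{a_1+1},\dots,x_{a_2}\},\dots,C_m=\{x_{a_{m-1}+1},\dots,x_n\}$. A block weighting is $\mu:X\to\mathbb{R}_{\ge0}$ with $\sum_{x\in C_r}\mu(x)=1$ for every $r$. Set $\delta(C_r,C_s)=\sum_{x\in C_r,y\in C_s}\mu(x)\mu(y)\delta(x,y)$ and $Q_\delta(C_r,C_s)=(m-2)\delta(C_r,C_s)-\sum_{t\ne r}\delta(C_r,C_t)-\sum_{t\ne s}\delta(C_s,C_t)$. *)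

theory Defs
  imports Complex_Main
begin

text \<open>Ground set X = {1..n}. Points are natural numbers.\<close>

definition dissimilarity :: "nat \<Rightarrow> (nat \<Rightarrow> nat \<Rightarrow> real) \<Rightarrow> bool" where
  "dissimilarity n \<delta> \<longleftrightarrow>
     (\<forall>i\<in>{1..n}. \<forall>j\<in>{1..n}. \<delta> i j = \<delta> j i \<and> \<delta> i j \<ge> 0) \<and>
     (\<forall>i\<in>{1..n}. \<delta> i i = 0)"

text \<open>A circular ordering (x_1,...,x_n) of X is given by the listing \<pi> k = x_k, a bijection of {1..n}.\<close>
definition circular_ordering :: "nat \<Rightarrow> (nat \<Rightarrow> nat) \<Rightarrow> bool" where
  "circular_ordering n \<pi> \<longleftrightarrow> bij_betw \<pi> {1..n} {1..n}"

definition kalmanson :: "nat \<Rightarrow> (nat \<Rightarrow> nat \<Rightarrow> real) \<Rightarrow> (nat \<Rightarrow> nat) \<Rightarrow> bool" where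
  "kalmanson n \<delta> \<pi> \<longleftrightarrow>
     (\<forall>i j k l. 1 \<le> i \<and> i < j \<and> j < k \<and> k < l \<and> l \<le> n \<longrightarrow>
        \<delta> (\<pi> i) (\<pi> j) + \<delta> (\<pi> k) (\<pi> l) \<le> \<delta> (\<pi> i) (\<pi> k) + \<delta> (\<pi> j) (\<pi> l) \<and>
        \<delta> (\<pi> i) (\<pi> l) + \<delta> (\<pi> j) (\<pi> k) \<le> \<delta> (\<pi> i) (\<pi> k) + \<delta> (\<pi> j) (\<pi> l))"

text \<open>Consecutive-interval partition given by cut points 0 = a 0 < a 1 < ... < a m = n;
  block r (1 \<le> r \<le> m) is C_r = {x_{a(r-1)+1}, ..., x_{a r}} (nonempty).\<close>
definition interval_cuts :: "nat \<Rightarrow> nat \<Rightarrow> (nat \<Rightarrow> nat) \<Rightarrow> bool" where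
  "interval_cuts n m a \<longleftrightarrow> a 0 = 0 \<and> a m = n \<and> (\<forall>r<m. a r < a (Suc r))"

definition block :: "(nat \<Rightarrow> nat) \<Rightarrow> (nat \<Rightarrow> nat) \<Rightarrow> nat \<Rightarrow> nat set" where
  "block \<pi> a r = \<pi> ` {a (r - 1) + 1 .. a r}"

definition block_weighting ::
  "nat \<Rightarrow> nat \<Rightarrow> (nat \<Rightarrow> nat) \<Rightarrow> (nat \<Rightarrow> nat) \<Rightarrow> (nat \<Rightarrow> real) \<Rightarrow> bool" where
  "block_weighting n m \<pi> a \<mu> \<longleftrightarrow>
     (\<forall>x\<in>{1..n}. \<mu> x \<ge> 0) \<and> (\<forall>r\<in>{1..m}. (\<Sum>x\<in>block \<pi> a r. \<mu> x) = 1)"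

definition block_dist ::
  "(nat \<Rightarrow> real) \<Rightarrow> (nat \<Rightarrow> nat \<Rightarrow> real) \<Rightarrow> nat set \<Rightarrow> nat set \<Rightarrow> real" where
  "block_dist \<mu> \<delta> A B = (\<Sum>x\<in>A. \<Sum>y\<in>B. \<mu> x * \<mu> y * \<delta> x y)"

definition Qdelta ::
  "nat \<Rightarrow> (nat \<Rightarrow> nat) \<Rightarrow> (nat \<Rightarrow> nat) \<Rightarrow> (nat \<Rightarrow> real) \<Rightarrow> (nat \<Rightarrow> nat \<Rightarrow> real) \<Rightarrow> nat \<Rightarrow> nat \<Rightarrow> real" where
  "Qdelta m \<pi> a \<mu> \<delta> r s =
     (real m - 2) * block_dist \<mu> \<delta> (block \<pi> a r) (block \<pi> a s)
     - (\<Sum>t\<in>{1..m} - {r}. block_dist \<mu> \<delta> (block \<pi> a r) (block \<pi> a t))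
     - (\<Sum>t\<in>{1..m} - {s}. block_dist \<mu> \<delta> (block \<pi> a s) (block \<pi> a t))"

end

theory Submission
  imports Defs
begin

text \<open>Write D(r,s) for \<delta>(C_r,C_s). Expanding Q_\<delta>, the sums over t of D(i,t) cancel and,
  since D is symmetric, what remains splits into m - 2 terms indexed by the blocks
  t \<notin> {i+1, i+2}:
  D(i,i+2) - D(i,i+1) + D(i+1,t) - D(i+2,t).
  For t = i this term vanishes. For any other t the blocks C_i, C_{i+1}, C_{i+2} lie on an arc
  of \<pi> that avoids C_t, so a Kalmanson inequality holds for every choice of one point from each
  of the four blocks; averaging it with the product weights \<mu>(x)\<mu>(y)\<mu>(z)\<mu>(w), which sum to 1
  over each block, shows that the term is nonnegative.\<close>

definition weighted_sum4 ::
  "(nat \<Rightarrow> real) \<Rightarrow> nat set \<Rightarrow> nat set \<Rightarrow> nat set \<Rightarrow> nat set \<Rightarrow> (nat \<Rightarrow> nat \<Rightarrow> nat \<Rightarrow> nat \<Rightarrow> real) \<Rightarrow> real"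
where
  "weighted_sum4 \<mu> A B C D h =
     (\<Sum>a\<in>A. \<Sum>b\<in>B. \<Sum>c\<in>C. \<Sum>d\<in>D. \<mu> a * \<mu> b * \<mu> c * \<mu> d * h a b c d)"

lemma weighted_sum4_swap_pairs:
  "weighted_sum4 \<mu> A B C D h = weighted_sum4 \<mu> C D A B (\<lambda>c d a b. h a b c d)"
  unfolding weighted_sum4_def
  by (subst sum.swap, subst (2) sum.swap, subst (3) sum.swap, subst (2) sum.swap)
     (simp add: mult_ac)

lemma weighted_sum4_swap_middle:
  "weighted_sum4 \<mu> A B C D h = weighted_sum4 \<mu> A C B D (\<lambda>a c b d. h a b c d)"
  unfolding weighted_sum4_def by (subst (2) sum.swap) (simp add: mult_ac)

lemma weighted_sum4_first_pair:
  assumes "sum \<mu> C = 1" "sum \<mu> D = 1"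
  shows "weighted_sum4 \<mu> A B C D (\<lambda>a b c d. f a b) = block_dist \<mu> f A B"
proof -
  have "weighted_sum4 \<mu> A B C D (\<lambda>a b c d. f a b)
      = (\<Sum>a\<in>A. \<Sum>b\<in>B. \<mu> a * \<mu> b * f a b * sum \<mu> C * sum \<mu> D)"
    unfolding weighted_sum4_def by (simp add: sum_distrib_left sum_distrib_right mult_ac)
  then show ?thesis
    using assms by (simp add: block_dist_def)
qed

lemma weighted_sum4_add:
  "weighted_sum4 \<mu> A B C D (\<lambda>a b c d. f a b c d + g a b c d)
     = weighted_sum4 \<mu> A B C D f + weighted_sum4 \<mu> A B C D g"
  unfolding weighted_sum4_def by (simp add: distrib_left sum.distrib)

lemma weighted_sum4_mono:
  assumes "\<And>a b c d. a \<in> A \<Longrightarrow> b \<in> B \<Longrightarrow> c \<in> C \<Longrightarrow> d \<in> D \<Longrightarrow> f a b c d \<le> g a b c d"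
    and "\<And>x. x \<in> A \<union> B \<union> C \<union> D \<Longrightarrow> \<mu> x \<ge> 0"
  shows "weighted_sum4 \<mu> A B C D f \<le> weighted_sum4 \<mu> A B C D g"
  unfolding weighted_sum4_def
  by (intro sum_mono mult_left_mono assms) (auto intro!: mult_nonneg_nonneg assms(2))

lemma block_dist_quadrangle:
  assumes "sum \<mu> A = 1" "sum \<mu> B = 1" "sum \<mu> C = 1" "sum \<mu> D = 1"
    and "\<And>x. x \<in> A \<union> B \<union> C \<union> D \<Longrightarrow> \<mu> x \<ge> 0"
    and "\<And>a b c d. a \<in> A \<Longrightarrow> b \<in> B \<Longrightarrow> c \<in> C \<Longrightarrow> d \<in> D \<Longrightarrow> \<delta> a b + \<delta> c d \<le> \<delta> a c + \<delta> b d"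
  shows "block_dist \<mu> \<delta> A B + block_dist \<mu> \<delta> C D \<le> block_dist \<mu> \<delta> A C + block_dist \<mu> \<delta> B D"
proof -
  have "weighted_sum4 \<mu> A B C D (\<lambda>a b c d. \<delta> a b + \<delta> c d)
      \<le> weighted_sum4 \<mu> A B C D (\<lambda>a b c d. \<delta> a c + \<delta> b d)"
    using assms(6,5) by (rule weighted_sum4_mono)
  moreover have "weighted_sum4 \<mu> A B C D (\<lambda>a b c d. \<delta> a b) = block_dist \<mu> \<delta> A B"
    using assms(3,4) by (rule weighted_sum4_first_pair)
  moreover have "weighted_sum4 \<mu> A B C D (\<lambda>a b c d. \<delta> c d) = block_dist \<mu> \<delta> C D"
    by (subst weighted_sum4_swap_pairs) (simp add: weighted_sum4_first_pair assms(1,2))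
  moreover have "weighted_sum4 \<mu> A B C D (\<lambda>a b c d. \<delta> a c) = block_dist \<mu> \<delta> A C"
    by (subst weighted_sum4_swap_middle) (simp add: weighted_sum4_first_pair assms(2,4))
  moreover have "weighted_sum4 \<mu> A B C D (\<lambda>a b c d. \<delta> b d) = block_dist \<mu> \<delta> B D"
    by (subst weighted_sum4_swap_middle, subst weighted_sum4_swap_pairs)
       (simp add: weighted_sum4_first_pair assms(1,3))
  ultimately show ?thesis
    by (simp add: weighted_sum4_add)
qed

lemma block_dist_sym:
  assumes "\<And>x y. x \<in> A \<Longrightarrow> y \<in> B \<Longrightarrow> \<delta> x y = \<delta> y x"
  shows "block_dist \<mu> \<delta> A B = block_dist \<mu> \<delta> B A"
  unfolding block_dist_def
  by (subst sum.swap) (auto intro!: sum.cong simp: assms mult_ac)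

lemma kalmanson_outside_arc:
  assumes dis: "dissimilarity n \<delta>" and co: "circular_ordering n \<pi>" and ka: "kalmanson n \<delta> \<pi>"
    and "p < q" "q < r" "p \<in> {1..n}" "r \<in> {1..n}" "s \<in> {1..n}" "s < p \<or> r < s"
  shows "\<delta> (\<pi> p) (\<pi> q) + \<delta> (\<pi> r) (\<pi> s) \<le> \<delta> (\<pi> p) (\<pi> r) + \<delta> (\<pi> q) (\<pi> s)"
  using \<open>s < p \<or> r < s\<close>
proof
  assume "s < p"
  then have "\<delta> (\<pi> s) (\<pi> r) + \<delta> (\<pi> p) (\<pi> q) \<le> \<delta> (\<pi> s) (\<pi> q) + \<delta> (\<pi> p) (\<pi> r)"
    using ka assms(4-8) unfolding kalmanson_def by simp
  moreover have "\<pi> x \<in> {1..n}" if "x \<in> {1..n}" for x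
    using co that unfolding circular_ordering_def bij_betw_def by blast
  then have "\<delta> (\<pi> s) (\<pi> r) = \<delta> (\<pi> r) (\<pi> s)" "\<delta> (\<pi> s) (\<pi> q) = \<delta> (\<pi> q) (\<pi> s)"
    using dis assms(4-8) unfolding dissimilarity_def by simp_all
  ultimately show ?thesis
    by simp
next
  assume "r < s"
  then show ?thesis
    using ka assms(4-8) unfolding kalmanson_def by simp
qed

lemma interval_cuts_mono:
  assumes "interval_cuts n m a" "r \<le> s" "s \<le> m"
  shows "a r \<le> a s"
proof (rule lift_Suc_mono_le_ivl[where N = "{..<m}" and f = a])
  show "a k \<le> a (Suc k)" if "k \<in> {..<m}" for k
    using assms(1) that unfolding interval_cuts_def by (simp add: less_imp_le)
  show "{r..<s} \<subseteq> {..<m}"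
    using assms(3) by auto
qed (fact assms(2))

lemma block_positions_bounded:
  assumes "interval_cuts n m a" "r \<le> m" "p \<in> {a (r - 1) + 1 .. a r}"
  shows "p \<in> {1..n}"
proof -
  have "a r \<le> n"
    using interval_cuts_mono[OF assms(1,2) order_refl] assms(1) unfolding interval_cuts_def by simp
  then show ?thesis
    using assms(3) by simp
qed

lemma block_positions_less:
  assumes "interval_cuts n m a" "r < s" "s \<le> m"
    and "p \<in> {a (r - 1) + 1 .. a r}" "q \<in> {a (s - 1) + 1 .. a s}"
  shows "p < q"
proof -
  have "a r \<le> a (s - 1)"
    using interval_cuts_mono[OF assms(1)] assms(2,3) by simp
  then show ?thesis
    using assms(4,5) by simp
qed

lemma block_subset:
  assumes "circular_ordering n \<pi>" "interval_cuts n m a" "r \<le> m"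
  shows "block \<pi> a r \<subseteq> {1..n}"
  using assms block_positions_bounded[OF assms(2,3)]
  unfolding block_def circular_ordering_def bij_betw_def by auto

definition block_dist_at ::
  "(nat \<Rightarrow> nat) \<Rightarrow> (nat \<Rightarrow> nat) \<Rightarrow> (nat \<Rightarrow> real) \<Rightarrow> (nat \<Rightarrow> nat \<Rightarrow> real) \<Rightarrow> nat \<Rightarrow> nat \<Rightarrow> real"
where
  "block_dist_at \<pi> a \<mu> \<delta> r s = block_dist \<mu> \<delta> (block \<pi> a r) (block \<pi> a s)"

lemma block_dist_at_sym:
  assumes "dissimilarity n \<delta>" "circular_ordering n \<pi>" "interval_cuts n m a" "r \<le> m" "s \<le> m"
  shows "block_dist_at \<pi> a \<mu> \<delta> r s = block_dist_at \<pi> a \<mu> \<delta> s r"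
  using assms(1) block_subset[OF assms(2,3)] assms(4,5)
  unfolding block_dist_at_def dissimilarity_def by (intro block_dist_sym) blast

lemma block_dist_at_quadrangle:
  assumes dis: "dissimilarity n \<delta>" and co: "circular_ordering n \<pi>" and ka: "kalmanson n \<delta> \<pi>"
    and cu: "interval_cuts n m a" and bw: "block_weighting n m \<pi> a \<mu>"
    and "1 \<le> j" "j < k" "k < l" "l \<le> m" and t: "t \<in> {1..m}" "t < j \<or> l < t"
  shows "block_dist_at \<pi> a \<mu> \<delta> j k + block_dist_at \<pi> a \<mu> \<delta> l t
    \<le> block_dist_at \<pi> a \<mu> \<delta> j l + block_dist_at \<pi> a \<mu> \<delta> k t"
proof -
  have indices: "j \<in> {1..m}" "k \<in> {1..m}" "l \<in> {1..m}"
    using assms(6-9) by auto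
  have weight_one: "sum \<mu> (block \<pi> a r) = 1" if "r \<in> {1..m}" for r
    using bw that unfolding block_weighting_def by blast
  have "block \<pi> a r \<subseteq> {1..n}" if "r \<in> {1..m}" for r
    using block_subset[OF co cu] that by simp
  then have blocks_in_X: "block \<pi> a j \<union> block \<pi> a k \<union> block \<pi> a l \<union> block \<pi> a t \<subseteq> {1..n}"
    using indices t(1) by blast
  show ?thesis
    unfolding block_dist_at_def
  proof (rule block_dist_quadrangle[OF weight_one[OF indices(1)] weight_one[OF indices(2)]
        weight_one[OF indices(3)] weight_one[OF t(1)]])
    show "\<mu> x \<ge> 0" if "x \<in> block \<pi> a j \<union> block \<pi> a k \<union> block \<pi> a l \<union> block \<pi> a t" for x
      using bw that blocks_in_X unfolding block_weighting_def by blast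
    fix x y z w
    assume "x \<in> block \<pi> a j" "y \<in> block \<pi> a k" "z \<in> block \<pi> a l" "w \<in> block \<pi> a t"
    then obtain p q r s where
      p: "p \<in> {a (j - 1) + 1 .. a j}" and q: "q \<in> {a (k - 1) + 1 .. a k}"
      and r: "r \<in> {a (l - 1) + 1 .. a l}" and s: "s \<in> {a (t - 1) + 1 .. a t}"
      and pts: "x = \<pi> p" "y = \<pi> q" "z = \<pi> r" "w = \<pi> s"
      unfolding block_def by (elim imageE) simp
    have "p < q"
      using block_positions_less[OF cu _ _ p q] assms(7-9) by simp
    moreover have "q < r"
      using block_positions_less[OF cu _ _ q r] assms(8,9) by simp
    moreover have "p \<in> {1..n}" "r \<in> {1..n}" "s \<in> {1..n}"
      using block_positions_bounded[OF cu _ p] block_positions_bounded[OF cu _ r]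
        block_positions_bounded[OF cu _ s] t(1) assms(7-9) by simp_all
    moreover have "s < p \<or> r < s"
      using block_positions_less[OF cu _ _ s p] block_positions_less[OF cu _ _ r s] t assms(7-9)
      by auto
    ultimately show "\<delta> x y + \<delta> z w \<le> \<delta> x z + \<delta> y w"
      unfolding pts by (rule kalmanson_outside_arc[OF dis co ka])
  qed
qed

lemma Qdelta_diff_eq_sum:
  assumes "j \<in> {1..m}" "k \<in> {1..m}" "j \<noteq> k"
    and "block_dist_at \<pi> a \<mu> \<delta> j k = block_dist_at \<pi> a \<mu> \<delta> k j"
  shows "Qdelta m \<pi> a \<mu> \<delta> r k - Qdelta m \<pi> a \<mu> \<delta> r j
    = (\<Sum>t\<in>{1..m} - {j, k}. block_dist_at \<pi> a \<mu> \<delta> r k - block_dist_at \<pi> a \<mu> \<delta> r j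
         + block_dist_at \<pi> a \<mu> \<delta> j t - block_dist_at \<pi> a \<mu> \<delta> k t)"
proof -
  define D where "D = block_dist_at \<pi> a \<mu> \<delta>"
  define U where "U = {1..m} - {j, k}"
  have "real m = real (card U) + 2"
    unfolding U_def using assms(1-3) by (subst card_Diff_subset) auto
  moreover have "{1..m} - {j} = insert k U" "{1..m} - {k} = insert j U" "j \<notin> U" "k \<notin> U"
    unfolding U_def using assms(1-3) by auto
  moreover have "finite U"
    unfolding U_def by simp
  ultimately have "Qdelta m \<pi> a \<mu> \<delta> r k - Qdelta m \<pi> a \<mu> \<delta> r j
      = (\<Sum>t\<in>U. D r k - D r j + D j t - D k t)"
    using assms(4) unfolding Qdelta_def D_def block_dist_at_def [symmetric]
    by (simp add: sum.distrib sum_subtractf algebra_simps)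
  then show ?thesis
    unfolding D_def U_def .
qed

theorem mainTheorem7:
  fixes n m :: nat and \<delta> :: "nat \<Rightarrow> nat \<Rightarrow> real" and \<pi> a :: "nat \<Rightarrow> nat"
    and \<mu> :: "nat \<Rightarrow> real" and i :: nat
  assumes "dissimilarity n \<delta>"
    and "circular_ordering n \<pi>"
    and "kalmanson n \<delta> \<pi>"
    and "m \<ge> 3"
    and "interval_cuts n m a"
    and "block_weighting n m \<pi> a \<mu>"
    and "1 \<le> i" and "i + 2 \<le> m"
  shows "Qdelta m \<pi> a \<mu> \<delta> i (i + 2) - Qdelta m \<pi> a \<mu> \<delta> i (i + 1) \<ge> 0"
proof -
  let ?D = "block_dist_at \<pi> a \<mu> \<delta>"
  have sym: "?D r s = ?D s r" if "r \<le> m" "s \<le> m" for r s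
    using block_dist_at_sym[OF assms(1,2,5) that] .
  have "0 \<le> (\<Sum>t\<in>{1..m} - {i + 1, i + 2}. ?D i (i + 2) - ?D i (i + 1) + ?D (i + 1) t - ?D (i + 2) t)"
  proof (rule sum_nonneg)
    fix t
    assume t: "t \<in> {1..m} - {i + 1, i + 2}"
    show "0 \<le> ?D i (i + 2) - ?D i (i + 1) + ?D (i + 1) t - ?D (i + 2) t"
    proof (cases "t = i")
      case True
      then show ?thesis
        using sym[of i "i + 1"] sym[of i "i + 2"] assms(8) by simp
    next
      case False
      with t have "t \<in> {1..m}" "t < i \<or> i + 2 < t"
        by auto
      then have "?D i (i + 1) + ?D (i + 2) t \<le> ?D i (i + 2) + ?D (i + 1) t"
        using block_dist_at_quadrangle[OF assms(1-3,5,6,7), of "i + 1" "i + 2"] assms(8) by simp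
      then show ?thesis
        by linarith
    qed
  qed
  also have "\<dots> = Qdelta m \<pi> a \<mu> \<delta> i (i + 2) - Qdelta m \<pi> a \<mu> \<delta> i (i + 1)"
    using assms(7,8) sym[of "i + 1" "i + 2"] by (intro Qdelta_diff_eq_sum [symmetric]) auto
  finally show ?thesis .
qed

end
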